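(* Let $\alpha,\beta>1$ with $\alpha+\beta\leqslant4$ and let $V,W$ satisfy (H1)–(H2). Let $e_0\in C_0^\infty(\Omega_1\cap\Omega_2)$ with $e_0^+\not\equiv0$ and $b^*>0$ be such that $\mathcal{J}^T_{\mathbf b,\lambda}((e_0,e_0))<0$ for all $T,\lambda>0$ and all $b_1,b_2>0$ with $b_1+b_2\in(0,b^* )$. Then there exists $D>0$, independent of $b_1,b_2,T,\lambda$, such that $c^T_{\mathbf b,\lambda}\leqslant D$ for any $\lambda\geqslant1$, $T>0$ and $b_1+b_2\in(0,b^* )$.
   Context: (H1) $V,W\in C(\mathbb{R}^3,[0,\infty))$; $\Omega_1=\operatorname{int}V^{-1}(0)$, $\Omega_2=\operatorname{int}W^{-1}(0)$ have smooth boundaries, $\overline{\Omega}_1=V^{-1}(0)$, $\overline{\Omega}_2=W^{-1}(0)$, $\Omega_1\cap\Omega_2\neq\emptyset$. (H2) There is $c>0$ with $\{x: V(x)W(x)\leqslant c^2\}$ of finite positive Lebesgue measure. $E=E_V\times E_W$, $E_V=\{u\in\mathcal{D}^{1,2}(\mathbb{R}^3):\int Vu^2<\infty\}$, $E_W$ analogous; $E_\lambda$ is $E$ with norm $\|z\|_\lambda^2=\int(|\nabla u|^2+|\nabla v|^2+\lambda Vu^2+\lambda Wv^2)$. $\mathcal{J}^T_{\mathbf b,\lambda}(z)=\frac12\|z\|_\lambda^2+\frac14\xi(\|z\|_\lambda^2/T^2)(b_1\|\nabla u\|_2^4+b_2\|\nabla v\|_2^4)-\frac{1}{\alpha+\beta}\int|u^+|^\alpha|v^+|^\beta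 dx$, with $\xi\in C^\infty([0,\infty),[0,1])$, $\xi=1$ on $[0,1]$, $\xi=0$ on $[2,\infty)$, $\xi'\leqslant0$, $\|\xi'\|_\infty\leqslant2$. The mountain pass level is $c^T_{\mathbf b,\lambda}=\inf_{\gamma\in\Gamma}\max_{t\in[0,1]}\mathcal{J}^T_{\mathbf b,\lambda}(\gamma(t))$, $\Gamma=\{\gamma\in C([0,1],E_\lambda):\gamma(0)=(0,0),\gamma(1)=(e_0,e_0)\}$. *)

theory Defs
  imports "HOL-Analysis.Analysis"
begin

type_synonym R3 = "real^3"
type_synonym fn3 = "R3 \<Rightarrow> real"

definition pd :: "3 \<Rightarrow> fn3 \<Rightarrow> fn3" where
  "pd i f x = deriv (\<lambda>t. f (x + t *\<^sub>R axis i 1)) 0"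

definition smooth_on :: "R3 set \<Rightarrow> fn3 \<Rightarrow> bool" where
  "smooth_on S f \<longleftrightarrow>
     (\<forall>is :: 3 list. continuous_on S (foldr pd is f) \<and>
        (\<forall>x\<in>S. \<forall>i. (\<lambda>t. foldr pd is f (x + t *\<^sub>R axis i 1)) differentiable (at 0)))"

definition tsupport :: "fn3 \<Rightarrow> R3 set" where
  "tsupport f = closure {x. f x \<noteq> 0}"

definition Cc_inf :: "R3 set \<Rightarrow> fn3 \<Rightarrow> bool" where
  "Cc_inf \<Omega> f \<longleftrightarrow> smooth_on UNIV f \<and> compact (tsupport f) \<and> tsupport f \<subseteq> \<Omega>"

definition smooth_boundary :: "R3 set \<Rightarrow> bool" where
  "smooth_boundary \<Omega> \<longleftrightarrow>
     (\<forall>p\<in>frontier \<Omega>. \<exists>U \<rho>. open U \<and> p \<in> U \<and> smooth_on U \<rho> \<and>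
        (\<forall>x\<in>U. \<exists>i. pd i \<rho> x \<noteq> 0) \<and> \<Omega> \<inter> U = {x\<in>U. \<rho> x < 0})"

definition weak_grad :: "fn3 \<Rightarrow> (R3 \<Rightarrow> R3) \<Rightarrow> bool" where
  "weak_grad u g \<longleftrightarrow>
     (\<forall>\<phi>. Cc_inf UNIV \<phi> \<longrightarrow> (\<forall>i.
        integrable lborel (\<lambda>x. u x * pd i \<phi> x) \<and>
        integrable lborel (\<lambda>x. g x $ i * \<phi> x) \<and>
        (\<integral>x. u x * pd i \<phi> x \<partial>lborel) = - (\<integral>x. g x $ i * \<phi> x \<partial>lborel)))"

definition good_grad :: "fn3 \<Rightarrow> (R3 \<Rightarrow> R3) \<Rightarrow> bool" where
  "good_grad u g \<longleftrightarrow> weak_grad u g \<and> g \<in> borel_measurable lborel \<and>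
      integrable lborel (\<lambda>x. (norm (g x))\<^sup>2)"

definition D12 :: "fn3 set" where
  "D12 = {u. u \<in> borel_measurable lborel \<and> integrable lborel (\<lambda>x. \<bar>u x\<bar> ^ 6) \<and>
             (\<exists>g. good_grad u g)}"

definition grad :: "fn3 \<Rightarrow> R3 \<Rightarrow> R3" where
  "grad u = (SOME g. good_grad u g)"

definition gradsq :: "fn3 \<Rightarrow> real" where
  "gradsq u = (\<integral>x. (norm (grad u x))\<^sup>2 \<partial>lborel)"

definition E_pot :: "fn3 \<Rightarrow> fn3 set" where
  "E_pot V = {u \<in> D12. integrable lborel (\<lambda>x. V x * (u x)\<^sup>2)}"

definition E_sp :: "fn3 \<Rightarrow> fn3 \<Rightarrow> (fn3 \<times> fn3) set" where
  "E_sp V W = E_pot V \<times> E_pot W"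

definition normsq :: "real \<Rightarrow> fn3 \<Rightarrow> fn3 \<Rightarrow> fn3 \<times> fn3 \<Rightarrow> real" where
  "normsq lam V W z = gradsq (fst z) + gradsq (snd z)
      + lam * (\<integral>x. V x * (fst z x)\<^sup>2 \<partial>lborel) + lam * (\<integral>x. W x * (snd z x)\<^sup>2 \<partial>lborel)"

definition Jfun :: "(real \<Rightarrow> real) \<Rightarrow> real \<Rightarrow> real \<Rightarrow> real \<Rightarrow> real \<Rightarrow> real \<Rightarrow> real
                   \<Rightarrow> fn3 \<Rightarrow> fn3 \<Rightarrow> fn3 \<times> fn3 \<Rightarrow> real" where
  "Jfun \<xi> \<alpha> \<beta> b1 b2 T lam V W z =
     normsq lam V W z / 2
     + \<xi> (normsq lam V W z / T\<^sup>2) * (b1 * (gradsq (fst z))\<^sup>2 + b2 * (gradsq (snd z))\<^sup>2) / 4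
     - (\<integral>x. (max (fst z x) 0) powr \<alpha> * (max (snd z x) 0) powr \<beta> \<partial>lborel) / (\<alpha> + \<beta>)"

definition paths :: "real \<Rightarrow> fn3 \<Rightarrow> fn3 \<Rightarrow> fn3 \<Rightarrow> (real \<Rightarrow> fn3 \<times> fn3) set" where
  "paths lam V W e0 = {\<gamma>. (\<forall>t\<in>{0..1}. \<gamma> t \<in> E_sp V W) \<and>
      (\<forall>t\<in>{0..1}. \<forall>\<epsilon>>0. \<exists>\<delta>>0. \<forall>s\<in>{0..1}. \<bar>s - t\<bar> < \<delta> \<longrightarrow>
          sqrt (normsq lam V W (\<lambda>x. fst (\<gamma> s) x - fst (\<gamma> t) x, \<lambda>x. snd (\<gamma> s) x - snd (\<gamma> t) x)) < \<epsilon>) \<and>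
      \<gamma> 0 = (\<lambda>x. 0, \<lambda>x. 0) \<and> \<gamma> 1 = (e0, e0)}"

definition mp_level :: "(real \<Rightarrow> real) \<Rightarrow> real \<Rightarrow> real \<Rightarrow> real \<Rightarrow> real \<Rightarrow> real \<Rightarrow> real
                   \<Rightarrow> fn3 \<Rightarrow> fn3 \<Rightarrow> fn3 \<Rightarrow> ereal" where
  "mp_level \<xi> \<alpha> \<beta> b1 b2 T lam V W e0 =
     (INF \<gamma>\<in>paths lam V W e0. SUP t\<in>{0..1}. ereal (Jfun \<xi> \<alpha> \<beta> b1 b2 T lam V W (\<gamma> t)))"

definition cutoff :: "(real \<Rightarrow> real) \<Rightarrow> bool" where
  "cutoff \<xi> \<longleftrightarrow> (\<forall>n x. ((deriv ^^ n) \<xi>) differentiable (at x)) \<and>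
     (\<forall>x\<ge>0. 0 \<le> \<xi> x \<and> \<xi> x \<le> 1) \<and> (\<forall>x\<in>{0..1}. \<xi> x = 1) \<and> (\<forall>x\<ge>2. \<xi> x = 0) \<and>
     (\<forall>x\<ge>0. deriv \<xi> x \<le> 0 \<and> \<bar>deriv \<xi> x\<bar> \<le> 2)"

definition H1 :: "fn3 \<Rightarrow> fn3 \<Rightarrow> bool" where
  "H1 V W \<longleftrightarrow> continuous_on UNIV V \<and> continuous_on UNIV W \<and>
     (\<forall>x. V x \<ge> 0) \<and> (\<forall>x. W x \<ge> 0) \<and>
     smooth_boundary (interior (V -` {0})) \<and> smooth_boundary (interior (W -` {0})) \<and>
     closure (interior (V -` {0})) = V -` {0} \<and> closure (interior (W -` {0})) = W -` {0} \<and>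
     interior (V -` {0}) \<inter> interior (W -` {0}) \<noteq> {}"

definition H2 :: "fn3 \<Rightarrow> fn3 \<Rightarrow> bool" where
  "H2 V W \<longleftrightarrow> (\<exists>c>0. 0 < emeasure lborel {x. V x * W x \<le> c\<^sup>2} \<and>
                        emeasure lborel {x. V x * W x \<le> c\<^sup>2} < \<infinity>)"

end

(* Along the straight path t |-> (t e0, t e0) the potential terms of the norm vanish, because e0
   is supported where V = W = 0, so the squared norm is 2 t^2 |grad e0|^2 whatever lambda is.
   The cutoff takes values in [0, 1] and the coupling integral is nonnegative, hence the
   functional stays below |grad e0|^2 + bstar |grad e0|^4 / 4 on the path.  Only alpha + beta > 0,
   the range of the cutoff and the support of e0 enter.

   The gradient of D^{1,2} is a chosen weak gradient, so evaluating |grad (t e0)|^2 requires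
   that the classical gradient of a compactly supported smooth function is a weak gradient
   (integration by parts, via translated difference quotients) and that weak gradients are
   unique almost everywhere.  Uniqueness is tested against products of
   exp(-1/(n (x_i - a_i))) exp(-1/(n (b_i - x_i))), which converge to the indicator of the
   box (a, b) as n grows. *)

theory Submission
  imports Defs "HOL-Computational_Algebra.Polynomial"
begin

section \<open>Smooth functions of one real variable\<close>

definition differentiable_upto :: "nat \<Rightarrow> (real \<Rightarrow> real) \<Rightarrow> bool" where
  "differentiable_upto n f \<longleftrightarrow> (\<forall>k\<le>n. \<forall>x. (deriv ^^ k) f differentiable (at x))"

definition smooth_real :: "(real \<Rightarrow> real) \<Rightarrow> bool" where
  "smooth_real f \<longleftrightarrow> (\<forall>n. differentiable_upto n f)"

lemma differentiable_upto_0: "differentiable_upto 0 f \<longleftrightarrow> (\<forall>x. f differentiable (at x))"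
  by (simp add: differentiable_upto_def)

lemma differentiable_upto_Suc:
  "differentiable_upto (Suc n) f \<longleftrightarrow>
     (\<forall>x. f differentiable (at x)) \<and> differentiable_upto n (deriv f)"
proof -
  have "(deriv ^^ Suc k) f = (deriv ^^ k) (deriv f)" for k
    by (simp add: funpow_Suc_right del: funpow.simps)
  moreover have "(\<forall>k\<le>Suc n. P k) \<longleftrightarrow> P 0 \<and> (\<forall>k\<le>n. P (Suc k))" for P
    by (metis Suc_le_mono le0 not0_implies_Suc)
  ultimately show ?thesis
    unfolding differentiable_upto_def by simp
qed

lemma differentiable_upto_DERIV:
  "differentiable_upto n f \<Longrightarrow> (f has_real_derivative deriv f x) (at x)"
  by (auto simp: differentiable_upto_def DERIV_deriv_iff_real_differentiable)

lemma deriv_fun_eq: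
  "(\<And>x. (f has_real_derivative f' x) (at x)) \<Longrightarrow> deriv f = f'"
  using DERIV_imp_deriv by blast

lemma differentiable_upto_const: "differentiable_upto n (\<lambda>_. c)"
proof (induction n arbitrary: c)
  case 0 then show ?case by (simp add: differentiable_upto_0)
next
  case (Suc n)
  have "deriv (\<lambda>_. c) = (\<lambda>_. 0)" by (rule deriv_fun_eq) simp
  with Suc show ?case by (simp add: differentiable_upto_Suc)
qed

lemma differentiable_upto_add:
  "differentiable_upto n f \<Longrightarrow> differentiable_upto n g \<Longrightarrow> differentiable_upto n (\<lambda>x. f x + g x)"
proof (induction n arbitrary: f g)
  case 0 then show ?case by (simp add: differentiable_upto_0)
next
  case (Suc n)
  have f: "(f has_real_derivative deriv f x) (at x)" and g: "(g has_real_derivative deriv g x) (at x)" for x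
    using Suc.prems by (blast intro: differentiable_upto_DERIV)+
  have "deriv (\<lambda>x. f x + g x) = (\<lambda>x. deriv f x + deriv g x)"
    using f g by (intro deriv_fun_eq derivative_eq_intros) auto
  with Suc show ?case by (simp add: differentiable_upto_Suc)
qed

lemma differentiable_upto_mono: "differentiable_upto n f \<Longrightarrow> m \<le> n \<Longrightarrow> differentiable_upto m f"
  by (simp add: differentiable_upto_def)

lemma differentiable_upto_mult:
  "differentiable_upto n f \<Longrightarrow> differentiable_upto n g \<Longrightarrow> differentiable_upto n (\<lambda>x. f x * g x)"
proof (induction n arbitrary: f g)
  case 0 then show ?case by (simp add: differentiable_upto_0)
next
  case (Suc n)
  have f: "(f has_real_derivative deriv f x) (at x)" and g: "(g has_real_derivative deriv g x) (at x)" for x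
    using Suc.prems by (blast intro: differentiable_upto_DERIV)+
  have "deriv (\<lambda>x. f x * g x) = (\<lambda>x. deriv f x * g x + f x * deriv g x)"
    using f g by (intro deriv_fun_eq derivative_eq_intros) auto
  moreover have "differentiable_upto n f" "differentiable_upto n g"
    using Suc.prems by (auto intro: differentiable_upto_mono)
  ultimately show ?case
    using Suc by (simp add: differentiable_upto_Suc differentiable_upto_add)
qed

lemma DERIV_compose_affine:
  "((\<lambda>x. f (a * x + b)) has_real_derivative a * f') (at x)"
  if "(f has_real_derivative f') (at (a * x + b))"
proof -
  have "((\<lambda>x. a * x + b) has_real_derivative a) (at x)"
    by (auto intro!: derivative_eq_intros)
  from DERIV_chain2[OF that this] show ?thesis by (simp add: mult.commute)
qed

lemma differentiable_upto_compose_affine: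
  "differentiable_upto n f \<Longrightarrow> differentiable_upto n (\<lambda>x. f (a * x + b))"
proof (induction n arbitrary: f)
  case 0 then show ?case
    using DERIV_compose_affine[OF differentiable_upto_DERIV]
    by (meson differentiable_upto_0 real_differentiable_def)
next
  case (Suc n)
  have "((\<lambda>x. f (a * x + b)) has_real_derivative a * deriv f (a * x + b)) (at x)" for x
    by (rule DERIV_compose_affine[OF differentiable_upto_DERIV[OF Suc.prems]])
  then have "deriv (\<lambda>x. f (a * x + b)) = (\<lambda>x. a * deriv f (a * x + b))"
    and "\<forall>x. (\<lambda>x. f (a * x + b)) differentiable (at x)"
    by (auto intro: deriv_fun_eq simp: real_differentiable_def)
  with Suc show ?case
    by (simp add: differentiable_upto_Suc differentiable_upto_mult differentiable_upto_const)
qed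

lemma smooth_real_mult: "smooth_real f \<Longrightarrow> smooth_real g \<Longrightarrow> smooth_real (\<lambda>x. f x * g x)"
  by (simp add: smooth_real_def differentiable_upto_mult)

lemma smooth_real_compose_affine: "smooth_real f \<Longrightarrow> smooth_real (\<lambda>x. f (a * x + b))"
  by (simp add: smooth_real_def differentiable_upto_compose_affine)

lemma smooth_real_deriv: "smooth_real f \<Longrightarrow> smooth_real (deriv f)"
  by (metis smooth_real_def differentiable_upto_Suc)

lemma smooth_real_higher_deriv: "smooth_real f \<Longrightarrow> smooth_real ((deriv ^^ n) f)"
  by (induction n) (simp_all add: smooth_real_deriv)

lemma smooth_real_DERIV: "smooth_real f \<Longrightarrow> (f has_real_derivative deriv f x) (at x)"
  using differentiable_upto_DERIV smooth_real_def by blast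

lemma smooth_real_isCont: "smooth_real f \<Longrightarrow> isCont f x"
  using smooth_real_DERIV DERIV_isCont by blast

section \<open>Smooth test functions approximating boxes\<close>

definition flat_exp :: "real poly \<Rightarrow> real \<Rightarrow> real" where
  "flat_exp p x = (if x \<le> 0 then 0 else poly p (1 / x) * exp (- (1 / x)))"

(* (p(1/x) exp(-1/x))' = (1/x)^2 (p(1/x) - p'(1/x)) exp(-1/x) *)
definition flat_exp_deriv_poly :: "real poly \<Rightarrow> real poly" where
  "flat_exp_deriv_poly p = [:0, 0, 1:] * (p - pderiv p)"

lemma poly_times_exp_minus_tendsto_0: "((\<lambda>y. poly p y * exp (- y)) \<longlongrightarrow> (0::real)) at_top"
proof -
  have "(\<lambda>y. poly p y * exp (- y)) = (\<lambda>y. \<Sum>i\<le>degree p. coeff p i * (y ^ i / exp y))"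
    by (simp add: poly_altdef sum_distrib_right exp_minus divide_inverse mult.assoc)
  then show ?thesis
    by (simp only:) (intro tendsto_null_sum tendsto_mult_right_zero tendsto_power_div_exp_0)
qed

lemma flat_exp_DERIV: "(flat_exp p has_real_derivative flat_exp (flat_exp_deriv_poly p) x) (at x)"
proof -
  consider "x > 0" | "x < 0" | "x = 0" by linarith
  then show ?thesis
  proof cases
    case 1
    have inv: "((\<lambda>x. 1 / x) has_real_derivative - 1 / x\<^sup>2) (at x)"
      using 1 by (auto intro!: derivative_eq_intros simp: power2_eq_square field_simps)
    have "((\<lambda>x. poly p (1 / x) * exp (- (1 / x))) has_real_derivative
            poly (pderiv p) (1 / x) * (- 1 / x\<^sup>2) * exp (- (1 / x))
            + exp (- (1 / x)) * - (- 1 / x\<^sup>2) * poly p (1 / x)) (at x)"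
      by (intro DERIV_mult DERIV_chain2[OF poly_DERIV inv]
                DERIV_chain2[OF DERIV_exp] DERIV_minus inv)
    moreover have "poly (pderiv p) (1 / x) * (- 1 / x\<^sup>2) * exp (- (1 / x))
            + exp (- (1 / x)) * - (- 1 / x\<^sup>2) * poly p (1 / x) = flat_exp (flat_exp_deriv_poly p) x"
      using 1 by (simp add: flat_exp_def flat_exp_deriv_poly_def power2_eq_square field_simps)
    ultimately have "((\<lambda>x. poly p (1 / x) * exp (- (1 / x))) has_real_derivative
        flat_exp (flat_exp_deriv_poly p) x) (at x)"
      by simp
    then show ?thesis
      by (rule has_field_derivative_transform_within_open[of _ _ _ "{0<..}"])
         (use 1 in \<open>auto simp: flat_exp_def\<close>)
  next
    case 2
    then have "((\<lambda>_. 0) has_real_derivative flat_exp (flat_exp_deriv_poly p) x) (at x)"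
      by (simp add: flat_exp_def)
    then show ?thesis
      by (rule has_field_derivative_transform_within_open[of _ _ _ "{..<0}"])
         (use 2 in \<open>auto simp: flat_exp_def\<close>)
  next
    case 3
    have "((\<lambda>y. flat_exp p y / y) \<longlongrightarrow> 0) (at_right 0)"
    proof (rule Lim_transform_eventually)
      show "((\<lambda>y. poly (pCons 0 p) (inverse y) * exp (- inverse y)) \<longlongrightarrow> 0) (at_right 0)"
        by (rule filterlim_compose[OF poly_times_exp_minus_tendsto_0 filterlim_inverse_at_top_right])
      show "\<forall>\<^sub>F y in at_right 0. poly (pCons 0 p) (inverse y) * exp (- inverse y) = flat_exp p y / y"
        by (auto simp: eventually_at_right_field flat_exp_def divide_inverse intro!: exI[of _ 1])
    qed
    moreover have "((\<lambda>y. flat_exp p y / y) \<longlongrightarrow> 0) (at_left 0)"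
      by (rule tendsto_eventually) (auto simp: eventually_at_left_field flat_exp_def intro!: exI[of _ "-1"])
    ultimately have "((\<lambda>y. (flat_exp p y - flat_exp p 0) / (y - 0)) \<longlongrightarrow> 0) (at 0)"
      by (simp add: flat_exp_def filterlim_split_at)
    then show ?thesis using 3 by (simp add: has_field_derivative_iff flat_exp_def)
  qed
qed

lemma smooth_real_flat_exp: "smooth_real (flat_exp p)"
proof -
  have "deriv (flat_exp p) = flat_exp (flat_exp_deriv_poly p)" for p
    using flat_exp_DERIV by (rule deriv_fun_eq)
  moreover have "flat_exp p differentiable (at x)" for p x
    using flat_exp_DERIV real_differentiable_def by blast
  ultimately have "differentiable_upto n (flat_exp p)" for n
    by (induction n arbitrary: p) (simp_all add: differentiable_upto_0 differentiable_upto_Suc)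
  then show ?thesis by (simp add: smooth_real_def)
qed

lemma flat_exp_1_tendsto_1: "(flat_exp 1 \<longlongrightarrow> 1) at_top"
proof (rule Lim_transform_eventually)
  show "((\<lambda>y::real. exp (- inverse y)) \<longlongrightarrow> 1) at_top"
    using tendsto_exp[OF tendsto_minus[OF tendsto_inverse_0_at_top[OF filterlim_ident]]] by simp
  show "\<forall>\<^sub>F y in at_top. exp (- inverse y) = flat_exp 1 y"
    by (auto simp: eventually_at_top_linorder flat_exp_def divide_inverse intro!: exI[of _ 1])
qed

lemma flat_exp_1_bounds: "0 \<le> flat_exp 1 x" "flat_exp 1 x \<le> 1"
  by (auto simp: flat_exp_def)

definition interval_bump :: "real \<Rightarrow> real \<Rightarrow> real \<Rightarrow> real \<Rightarrow> real" where
  "interval_bump n a b t = flat_exp 1 (n * (t - a)) * flat_exp 1 (n * (b - t))"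

lemma smooth_real_interval_bump: "smooth_real (interval_bump n a b)"
proof -
  have "interval_bump n a b = (\<lambda>t. flat_exp 1 (n * t + - n * a) * flat_exp 1 (- n * t + n * b))"
    by (simp add: interval_bump_def fun_eq_iff algebra_simps)
  then show ?thesis
    by (simp only:) (intro smooth_real_mult smooth_real_compose_affine smooth_real_flat_exp)
qed

lemma interval_bump_bounds: "0 \<le> interval_bump n a b t" "interval_bump n a b t \<le> 1"
  using flat_exp_1_bounds by (auto simp: interval_bump_def mult_le_one)

lemma interval_bump_eq_0: "n \<ge> 0 \<Longrightarrow> t \<notin> {a<..<b} \<Longrightarrow> interval_bump n a b t = 0"
  by (auto simp: interval_bump_def flat_exp_def mult_nonneg_nonpos)

lemma interval_bump_tendsto_indicator:
  "(\<lambda>k. interval_bump (real k) a b t) \<longlonglongrightarrow> indicator {a<..<b} t"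
proof (cases "t \<in> {a<..<b}")
  case True
  have "(\<lambda>k. flat_exp 1 (c * real k)) \<longlonglongrightarrow> 1" if "c > 0" for c
    by (rule filterlim_compose[OF flat_exp_1_tendsto_1]
        filterlim_tendsto_pos_mult_at_top tendsto_const that filterlim_real_sequentially)+
  from tendsto_mult[OF this this, of "t - a" "b - t"] True show ?thesis
    by (simp add: interval_bump_def mult.commute)
next
  case False
  then show ?thesis by (simp add: interval_bump_eq_0)
qed

definition tensor_deriv :: "(3 \<Rightarrow> real \<Rightarrow> real) \<Rightarrow> (3 \<Rightarrow> nat) \<Rightarrow> fn3" where
  "tensor_deriv u m x = (\<Prod>i\<in>UNIV. (deriv ^^ m i) (u i) (x $ i))"

lemma tensor_deriv_along_axis:
  "tensor_deriv u m (x + t *\<^sub>R axis j 1) =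
     (\<Prod>i\<in>UNIV - {j}. (deriv ^^ m i) (u i) (x $ i)) * (deriv ^^ m j) (u j) (x $ j + t)"
proof -
  have "(\<Prod>i\<in>UNIV - {j}. (deriv ^^ m i) (u i) ((x + t *\<^sub>R axis j 1) $ i)) =
        (\<Prod>i\<in>UNIV - {j}. (deriv ^^ m i) (u i) (x $ i))"
    by (rule prod.cong) (auto simp: axis_def)
  then show ?thesis
    unfolding tensor_deriv_def by (subst prod.remove[of UNIV j]) (auto simp: axis_def)
qed

lemma tensor_deriv_DERIV_axis:
  assumes "\<And>i. smooth_real (u i)"
  shows "((\<lambda>t. tensor_deriv u m (x + t *\<^sub>R axis j 1)) has_real_derivative
           tensor_deriv u (m(j := Suc (m j))) x) (at 0)"
proof -
  let ?c = "\<Prod>i\<in>UNIV - {j}. (deriv ^^ m i) (u i) (x $ i)"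
  have "((\<lambda>t. (deriv ^^ m j) (u j) (x $ j + t)) has_real_derivative
          (deriv ^^ Suc (m j)) (u j) (x $ j)) (at 0)"
    using DERIV_compose_affine[of "(deriv ^^ m j) (u j)" _ 1 0 "x $ j"]
      smooth_real_DERIV[OF smooth_real_higher_deriv[OF assms]]
    by (simp add: add.commute)
  then have "((\<lambda>t. tensor_deriv u m (x + t *\<^sub>R axis j 1)) has_real_derivative
          ?c * (deriv ^^ Suc (m j)) (u j) (x $ j)) (at 0)"
    unfolding tensor_deriv_along_axis by (rule DERIV_cmult)
  also have "?c * (deriv ^^ Suc (m j)) (u j) (x $ j) = tensor_deriv u (m(j := Suc (m j))) x"
    using tensor_deriv_along_axis[of u "m(j := Suc (m j))" x 0 j] by simp
  finally show ?thesis .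
qed

lemma pd_tensor_deriv:
  assumes "\<And>i. smooth_real (u i)"
  shows "pd j (tensor_deriv u m) = tensor_deriv u (m(j := Suc (m j)))"
proof
  fix x
  show "pd j (tensor_deriv u m) x = tensor_deriv u (m(j := Suc (m j))) x"
    unfolding pd_def using tensor_deriv_DERIV_axis[OF assms] by (rule DERIV_imp_deriv)
qed

lemma continuous_on_tensor_deriv:
  assumes "\<And>i. smooth_real (u i)"
  shows "continuous_on S (tensor_deriv u m)"
proof -
  have "continuous_on UNIV ((deriv ^^ m i) (u i))" for i
    using smooth_real_isCont[OF smooth_real_higher_deriv[OF assms]]
    by (simp add: continuous_at_imp_continuous_on)
  then have "continuous_on S (\<lambda>x::R3. (deriv ^^ m i) (u i) (x $ i))" for i
    by (rule continuous_on_compose2[of UNIV]) (auto intro: continuous_on_component continuous_on_id)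
  then show ?thesis
    unfolding tensor_deriv_def[abs_def] by (rule continuous_on_prod)
qed

lemma smooth_on_tensor_deriv:
  assumes "\<And>i. smooth_real (u i)"
  shows "smooth_on S (tensor_deriv u m)"
proof -
  have "foldr pd is (tensor_deriv u m) = tensor_deriv u (foldr (\<lambda>j m. m(j := Suc (m j))) is m)"
    for "is"
    by (induction "is") (simp_all add: pd_tensor_deriv[OF assms] fun_upd_def)
  moreover have "(\<lambda>t. tensor_deriv u m' (x + t *\<^sub>R axis i 1)) differentiable (at 0)" for m' x i
    using tensor_deriv_DERIV_axis[of u, OF assms] real_differentiable_def by blast
  ultimately show ?thesis
    unfolding smooth_on_def by (simp add: continuous_on_tensor_deriv[OF assms])
qed

definition box_test :: "real \<Rightarrow> R3 \<Rightarrow> R3 \<Rightarrow> fn3" where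
  "box_test n a b x = (\<Prod>i\<in>UNIV. interval_bump n (a $ i) (b $ i) (x $ i))"

lemma box_test_eq_tensor_deriv:
  "box_test n a b = tensor_deriv (\<lambda>i. interval_bump n (a $ i) (b $ i)) (\<lambda>_. 0)"
  by (simp add: fun_eq_iff box_test_def tensor_deriv_def)

lemma continuous_on_box_test: "continuous_on S (box_test n a b)"
  unfolding box_test_eq_tensor_deriv by (intro continuous_on_tensor_deriv smooth_real_interval_bump)

lemma box_test_bounds: "0 \<le> box_test n a b x" "box_test n a b x \<le> 1"
  unfolding box_test_def using interval_bump_bounds by (auto intro: prod_nonneg prod_le_1)

lemma box_test_eq_0:
  assumes "n \<ge> 0" "x \<notin> box a b"
  shows "box_test n a b x = 0"
proof -
  obtain i where "x $ i \<notin> {a $ i<..<b $ i}"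
    using assms(2) by (auto simp: mem_box_cart)
  then show ?thesis
    unfolding box_test_def using assms(1) by (intro prod_zero bexI[of _ i] interval_bump_eq_0) auto
qed

lemma box_test_abs_le_indicator: "n \<ge> 0 \<Longrightarrow> \<bar>box_test n a b x\<bar> \<le> indicator (box a b) x"
  using box_test_bounds box_test_eq_0 by (simp split: split_indicator)

lemma prod_indicator_box:
  fixes a b x :: "real^'n"
  shows "(\<Prod>i\<in>UNIV. indicator {a $ i<..<b $ i} (x $ i) :: real) = indicator (box a b) x"
proof (cases "x \<in> box a b")
  case True
  then show ?thesis by (simp add: mem_box_cart)
next
  case False
  then obtain i where "x $ i \<notin> {a $ i<..<b $ i}" by (auto simp: mem_box_cart)
  with False show ?thesis by (simp add: prod_zero[OF _ bexI[of _ i]])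
qed

lemma box_test_tendsto_indicator:
  "(\<lambda>k. box_test (real k) a b x) \<longlonglongrightarrow> indicator (box a b) x"
  unfolding box_test_def prod_indicator_box[symmetric]
  by (intro tendsto_prod interval_bump_tendsto_indicator)

lemma Cc_inf_box_test: "n \<ge> 0 \<Longrightarrow> Cc_inf UNIV (box_test n a b)"
proof -
  assume "n \<ge> 0"
  then have "{x. box_test n a b x \<noteq> 0} \<subseteq> cbox a b"
    using box_test_eq_0 box_subset_cbox by blast
  then have "tsupport (box_test n a b) \<subseteq> cbox a b"
    unfolding tsupport_def by (rule closure_minimal) (simp add: closed_cbox)
  then have "compact (tsupport (box_test n a b))"
    by (metis bounded_cbox bounded_subset closed_closure compact_eq_bounded_closed tsupport_def)
  moreover have "smooth_on UNIV (box_test n a b)"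
    unfolding box_test_eq_tensor_deriv by (intro smooth_on_tensor_deriv smooth_real_interval_bump)
  ultimately show ?thesis
    by (simp add: Cc_inf_def)
qed

section \<open>Functions orthogonal to all test functions\<close>

lemma emeasure_density_box:
  fixes f :: "'a::euclidean_space \<Rightarrow> real"
  assumes [measurable]: "f \<in> borel_measurable lborel" and "\<And>x. 0 \<le> f x"
    and "integrable lborel (\<lambda>x. indicator (box a b) x * f x)"
  shows "emeasure (density lborel (\<lambda>x. ennreal (f x))) (box a b) =
           ennreal (\<integral>x. indicator (box a b) x * f x \<partial>lborel)"
proof -
  have "emeasure (density lborel (\<lambda>x. ennreal (f x))) (box a b) =
          (\<integral>\<^sup>+ x. ennreal (indicator (box a b) x * f x) \<partial>lborel)"
    by (subst emeasure_density) (auto intro!: nn_integral_cong split: split_indicator)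
  also have "\<dots> = ennreal (\<integral>x. indicator (box a b) x * f x \<partial>lborel)"
    using assms by (intro nn_integral_eq_integral) auto
  finally show ?thesis .
qed

lemma density_lborel_eq_if_box_integrals_eq:
  fixes f g :: "'a::euclidean_space \<Rightarrow> real"
  assumes [measurable]: "f \<in> borel_measurable lborel" "g \<in> borel_measurable lborel"
    and nonneg: "\<And>x. 0 \<le> f x" "\<And>x. 0 \<le> g x"
    and int: "\<And>a b. integrable lborel (\<lambda>x. indicator (box a b) x * f x)"
             "\<And>a b. integrable lborel (\<lambda>x. indicator (box a b) x * g x)"
    and eq: "\<And>a b. (\<integral>x. indicator (box a b) x * f x \<partial>lborel) = (\<integral>x. indicator (box a b) x * g x \<partial>lborel)"
  shows "density lborel (\<lambda>x. ennreal (f x)) = density lborel (\<lambda>x. ennreal (g x))"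
proof (rule measure_eqI_generator_eq[where E="range (\<lambda>(a, b). box a b)" and \<Omega>=UNIV
      and A="\<lambda>n::nat. box (- (real n *\<^sub>R One)) (real n *\<^sub>R One)"])
  show "Int_stable (range (\<lambda>(a, b). box a b :: 'a set))"
    by (auto simp: Int_stable_def box_Int_box)
  show "sets (density lborel (\<lambda>x. ennreal (f x))) = sigma_sets UNIV (range (\<lambda>(a, b). box a b))"
       "sets (density lborel (\<lambda>x. ennreal (g x))) = sigma_sets UNIV (range (\<lambda>(a, b). box a b))"
    by (simp_all add: borel_eq_box)
  show "(\<Union>n::nat. box (- (real n *\<^sub>R One)) (real n *\<^sub>R One) :: 'a set) = UNIV"
    by (rule UN_box_eq_UNIV)
  show "emeasure (density lborel (\<lambda>x. ennreal (f x))) (box (- (real n *\<^sub>R One)) (real n *\<^sub>R One)) \<noteq> \<infinity>"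
    for n
    by (simp add: emeasure_density_box nonneg int)
  show "emeasure (density lborel (\<lambda>x. ennreal (f x))) X = emeasure (density lborel (\<lambda>x. ennreal (g x))) X"
    if "X \<in> range (\<lambda>(a, b). box a b)" for X
    using that by (auto simp: emeasure_density_box nonneg int eq)
qed auto

lemma AE_eq_0_if_box_integrals_eq_0:
  fixes h :: "'a::euclidean_space \<Rightarrow> real"
  assumes [measurable]: "h \<in> borel_measurable lborel"
    and int: "\<And>a b. integrable lborel (\<lambda>x. indicator (box a b) x * h x)"
    and zero: "\<And>a b. (\<integral>x. indicator (box a b) x * h x \<partial>lborel) = 0"
  shows "AE x in lborel. h x = 0"
proof -
  define hp where "hp x = max (h x) 0" for x
  define hn where "hn x = max (- h x) 0" for x
  have [measurable]: "hp \<in> borel_measurable lborel" "hn \<in> borel_measurable lborel"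
    unfolding hp_def hn_def by measurable
  have split: "indicator (box a b) x * h x = indicator (box a b) x * hp x - indicator (box a b) x * hn x"
    for a b x
    by (auto simp: hp_def hn_def max_def split: split_indicator)
  have int_hp: "integrable lborel (\<lambda>x. indicator (box a b) x * hp x)"
   and int_hn: "integrable lborel (\<lambda>x. indicator (box a b) x * hn x)" for a b
    by (rule Bochner_Integration.integrable_bound[OF int[of a b]];
        auto simp: hp_def hn_def split: split_indicator)+
  have "density lborel (\<lambda>x. ennreal (hp x)) = density lborel (\<lambda>x. ennreal (hn x))"
  proof (rule density_lborel_eq_if_box_integrals_eq)
    show "(\<integral>x. indicator (box a b) x * hp x \<partial>lborel) = (\<integral>x. indicator (box a b) x * hn x \<partial>lborel)"
      for a b
      using zero[of a b] int_hp int_hn unfolding split by simp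
  qed (fact int_hp int_hn | simp add: hp_def hn_def)+
  then have "AE x in lborel. ennreal (hp x) = ennreal (hn x)"
    by (intro sigma_finite_measure.density_unique[OF sigma_finite_lborel]) auto
  then show ?thesis
    by eventually_elim (auto simp: hp_def hn_def max_def split: if_splits)
qed

lemma square_integrable_imp_integrable_on_cbox:
  fixes h :: "'a::euclidean_space \<Rightarrow> real"
  assumes [measurable]: "h \<in> borel_measurable lborel" and "integrable lborel (\<lambda>x. (h x)\<^sup>2)"
  shows "integrable lborel (\<lambda>x. indicator (cbox a b) x * h x)"
proof (rule Bochner_Integration.integrable_bound)
  show "integrable lborel (\<lambda>x. (h x)\<^sup>2 + indicator (cbox a b) x)"
    using assms(2) emeasure_lborel_cbox_finite by (intro Bochner_Integration.integrable_add integrable_real_indicator) auto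
  have "\<bar>y\<bar> \<le> y\<^sup>2 + 1" for y :: real
  proof -
    have "0 \<le> (\<bar>y\<bar> - 1)\<^sup>2" by simp
    then show ?thesis by (simp add: power2_diff)
  qed
  then show "AE x in lborel. norm (indicator (cbox a b) x * h x) \<le> norm ((h x)\<^sup>2 + indicator (cbox a b) x)"
    by (auto split: split_indicator)
qed simp

lemma AE_eq_0_if_test_integrals_eq_0:
  fixes h :: "fn3"
  assumes [measurable]: "h \<in> borel_measurable lborel"
    and int: "\<And>a b. integrable lborel (\<lambda>x. indicator (cbox a b) x * h x)"
    and zero: "\<And>\<phi>. Cc_inf UNIV \<phi> \<Longrightarrow> (\<integral>x. h x * \<phi> x \<partial>lborel) = 0"
  shows "AE x in lborel. h x = 0"
proof (rule AE_eq_0_if_box_integrals_eq_0)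
  fix a b :: R3
  have bound: "\<bar>f x * h x\<bar> \<le> \<bar>indicator (cbox a b) x * h x\<bar>"
    if "\<bar>f x\<bar> \<le> indicator (box a b) x" for f :: fn3 and x
  proof (cases "x \<in> box a b")
    case True
    then have "x \<in> cbox a b" using box_subset_cbox by blast
    with True that show ?thesis by (simp add: abs_mult mult_left_le_one_le)
  next
    case False
    with that show ?thesis by simp
  qed
  show int_box: "integrable lborel (\<lambda>x. indicator (box a b) x * h x)"
    using bound[of "indicator (box a b)"]
    by (intro Bochner_Integration.integrable_bound[OF int[of a b]] AE_I2) auto
  have [measurable]: "box_test n a b \<in> borel_measurable lborel" for n
    using borel_measurable_continuous_onI[OF continuous_on_box_test] by simp
  have "(\<lambda>k. \<integral>x. h x * box_test (real k) a b x \<partial>lborel) \<longlonglongrightarrow> (\<integral>x. indicator (box a b) x * h x \<partial>lborel)"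
  proof (rule integral_dominated_convergence[where w="\<lambda>x. \<bar>indicator (cbox a b) x * h x\<bar>"])
    show "integrable lborel (\<lambda>x. \<bar>indicator (cbox a b) x * h x\<bar>)"
      using int by (rule integrable_abs)
    show "AE x in lborel. (\<lambda>k. h x * box_test (real k) a b x) \<longlonglongrightarrow> indicator (box a b) x * h x"
      using box_test_tendsto_indicator by (auto intro!: tendsto_mult_left simp: mult.commute)
    show "AE x in lborel. norm (h x * box_test (real k) a b x) \<le> \<bar>indicator (cbox a b) x * h x\<bar>" for k
      using bound[of "box_test (real k) a b"] box_test_abs_le_indicator
      by (intro AE_I2) (simp add: mult.commute)
  qed measurable
  moreover have "(\<integral>x. h x * box_test (real k) a b x \<partial>lborel) = 0" for k
    by (intro zero Cc_inf_box_test) simp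
  ultimately show "(\<integral>x. indicator (box a b) x * h x \<partial>lborel) = 0"
    by (simp add: LIMSEQ_const_iff)
qed measurable

section \<open>Integration by parts and weak gradients\<close>

lemma integrable_vanishing_outside_ball:
  fixes f :: "'a::euclidean_space \<Rightarrow> real"
  assumes "continuous_on UNIV f" and "\<And>x. R \<le> norm x \<Longrightarrow> f x = 0"
  shows "integrable lborel f"
proof -
  have "integrable lborel (\<lambda>x. indicator (cball 0 R) x *\<^sub>R f x)"
    by (rule borel_integrable_compact[OF compact_cball continuous_on_subset[OF assms(1)]]) auto
  moreover have "(\<lambda>x. indicator (cball 0 R) x *\<^sub>R f x) = f"
    using assms(2) by (auto simp: fun_eq_iff split: split_indicator)
  ultimately show ?thesis by simp
qed

lemma lborel_integral_translate:
  fixes f :: "'a::euclidean_space \<Rightarrow> real"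
  assumes [measurable]: "f \<in> borel_measurable borel"
  shows "(\<integral>x. f (x + c) \<partial>lborel) = (\<integral>x. f x \<partial>lborel)"
proof -
  have "(\<integral>x. f x \<partial>lborel) = (\<integral>x. f x \<partial>distr lborel borel ((+) c))"
    by (simp add: lborel_distr_plus)
  also have "\<dots> = (\<integral>x. f (c + x) \<partial>lborel)"
    by (rule integral_distr) auto
  finally show ?thesis by (simp add: add.commute)
qed

lemma integral_translate_diff_eq_0:
  fixes f :: "'a::euclidean_space \<Rightarrow> real"
  assumes cf: "continuous_on UNIV f" and supp: "\<And>x. R \<le> norm x \<Longrightarrow> f x = 0"
  shows "(\<integral>x. f (x + c) - f x \<partial>lborel) = 0"
proof -
  have [measurable]: "f \<in> borel_measurable borel"
    using cf by (rule borel_measurable_continuous_onI)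
  have "integrable lborel (\<lambda>x. f (x + c))"
  proof (rule integrable_vanishing_outside_ball)
    show "continuous_on UNIV (\<lambda>x. f (x + c))"
      by (intro continuous_on_compose2[OF cf] continuous_intros) auto
    show "f (x + c) = 0" if "R + norm c \<le> norm x" for x
      using that norm_triangle_ineq4[of "x + c" c] by (intro supp) simp
  qed
  moreover have "integrable lborel f"
    using cf supp by (rule integrable_vanishing_outside_ball)
  ultimately show ?thesis
    by (simp add: lborel_integral_translate)
qed

lemma DERIV_along_line:
  fixes f :: "'a::real_vector \<Rightarrow> real"
  assumes "\<And>x. ((\<lambda>t. f (x + t *\<^sub>R v)) has_real_derivative d x) (at 0)"
  shows "((\<lambda>t. f (x + t *\<^sub>R v)) has_real_derivative d (x + s *\<^sub>R v)) (at s)"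
proof -
  have "(\<lambda>t. f ((x + s *\<^sub>R v) + t *\<^sub>R v)) = (\<lambda>t. f (x + (t + s) *\<^sub>R v))"
    by (simp add: algebra_simps)
  then show ?thesis
    using assms[of "x + s *\<^sub>R v"] DERIV_shift[of "\<lambda>t. f (x + t *\<^sub>R v)" _ 0 s] by simp
qed

lemma difference_quotient_bound:
  fixes f d :: "'a::real_normed_vector \<Rightarrow> real"
  assumes supp: "\<And>x. R \<le> norm x \<Longrightarrow> f x = 0"
    and der: "\<And>x. ((\<lambda>t. f (x + t *\<^sub>R v)) has_real_derivative d x) (at 0)"
    and M: "\<And>y. y \<in> cball 0 (R + 2 * norm v) \<Longrightarrow> norm (d y) \<le> M"
    and h: "0 < h" "h \<le> 1"
  shows "norm ((f (x + h *\<^sub>R v) - f x) / h) \<le> M * indicator (cball 0 (R + norm v)) x"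
proof (cases "norm x \<le> R + norm v")
  case True
  obtain z where z: "0 < z" "z < h" "f (x + h *\<^sub>R v) - f (x + 0 *\<^sub>R v) = (h - 0) * d (x + z *\<^sub>R v)"
    using MVT2[of 0 h "\<lambda>t. f (x + t *\<^sub>R v)" "\<lambda>t. d (x + t *\<^sub>R v)"] h DERIV_along_line[OF der]
    by auto
  have "norm (x + z *\<^sub>R v) \<le> R + 2 * norm v"
    using True z h norm_triangle_ineq[of x "z *\<^sub>R v"] mult_left_le_one_le[of "norm v" z]
    by auto
  then show ?thesis
    using True z h M by simp
next
  case False
  have "norm x \<le> norm (x + h *\<^sub>R v) + h * norm v"
    using norm_triangle_ineq4[of "x + h *\<^sub>R v" "h *\<^sub>R v"] h by simp
  then have "R \<le> norm (x + h *\<^sub>R v)" "R \<le> norm x"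
    using False mult_left_le_one_le[of "norm v" h] h norm_ge_zero[of v] by linarith+
  with False show ?thesis by (simp add: supp)
qed

lemma integral_directional_derivative_eq_0:
  fixes f d :: "'a::euclidean_space \<Rightarrow> real"
  assumes cf: "continuous_on UNIV f" and cd: "continuous_on UNIV d"
    and supp: "\<And>x. R \<le> norm x \<Longrightarrow> f x = 0"
    and der: "\<And>x. ((\<lambda>t. f (x + t *\<^sub>R v)) has_real_derivative d x) (at 0)"
  shows "integral\<^sup>L lborel d = 0"
proof -
  define h :: "nat \<Rightarrow> real" where "h n = inverse (real (Suc n))" for n
  define s where "s n x = (f (x + h n *\<^sub>R v) - f x) / h n" for n x
  have h: "0 < h n" "h n \<le> 1" for n
    by (auto simp: h_def field_simps)
  have [measurable]: "f \<in> borel_measurable borel" "d \<in> borel_measurable borel"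
    using cf cd by (auto intro: borel_measurable_continuous_onI)
  have [measurable]: "s n \<in> borel_measurable lborel" for n
    unfolding s_def by measurable
  have "integral\<^sup>L lborel (s n) = 0" for n
    using integral_translate_diff_eq_0[of f R, OF cf supp] unfolding s_def by simp
  obtain M where M: "\<And>y. y \<in> cball 0 (R + 2 * norm v) \<Longrightarrow> norm (d y) \<le> M"
    using compact_imp_bounded[OF compact_continuous_image[OF continuous_on_subset[OF cd] compact_cball]]
    unfolding bounded_iff by blast
  have "(\<lambda>n. integral\<^sup>L lborel (s n)) \<longlonglongrightarrow> integral\<^sup>L lborel d"
  proof (rule integral_dominated_convergence[where w="\<lambda>x. M * indicator (cball 0 (R + norm v)) x"])
    show "integrable lborel (\<lambda>x. M * indicator (cball 0 (R + norm v)) x)"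
      using emeasure_compact_finite[OF compact_cball]
      by (intro integrable_mult_right integrable_real_indicator) auto
    show "AE x in lborel. (\<lambda>n. s n x) \<longlonglongrightarrow> d x"
    proof (intro AE_I2)
      fix x
      have "((\<lambda>t. (f (x + t *\<^sub>R v) - f x) / t) \<longlongrightarrow> d x) (at 0)"
        using der[of x] by (simp add: has_field_derivative_iff)
      moreover have "filterlim h (at 0) sequentially"
        unfolding h_def filterlim_at using LIMSEQ_inverse_real_of_nat by simp
      ultimately show "(\<lambda>n. s n x) \<longlonglongrightarrow> d x"
        unfolding s_def by (rule filterlim_compose)
    qed
    show "AE x in lborel. norm (s n x) \<le> M * indicator (cball 0 (R + norm v)) x" for n
      unfolding s_def using difference_quotient_bound[OF supp der M h] by simp
  qed measurable
  with \<open>\<And>n. integral\<^sup>L lborel (s n) = 0\<close> show ?thesis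
    by (simp add: LIMSEQ_const_iff)
qed

lemma
  assumes "Cc_inf \<Omega> e"
  shows Cc_inf_continuous: "continuous_on UNIV e"
    and Cc_inf_continuous_pd: "continuous_on UNIV (pd i e)"
    and Cc_inf_DERIV_axis: "((\<lambda>t. e (x + t *\<^sub>R axis i 1)) has_real_derivative pd i e x) (at 0)"
proof -
  have smooth: "continuous_on UNIV (foldr pd is e)"
    "(\<lambda>t. foldr pd is e (x + t *\<^sub>R axis i 1)) differentiable (at 0)" for "is" x i
    using assms by (auto simp: Cc_inf_def smooth_on_def)
  show "continuous_on UNIV e" using smooth(1)[of "[]"] by simp
  show "continuous_on UNIV (pd i e)" using smooth(1)[of "[i]"] by simp
  show "((\<lambda>t. e (x + t *\<^sub>R axis i 1)) has_real_derivative pd i e x) (at 0)"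
    using smooth(2)[of "[]"] by (simp add: pd_def DERIV_deriv_iff_real_differentiable)
qed

lemma Cc_inf_vanishing_outside_ball:
  assumes "Cc_inf \<Omega> e"
  obtains R where "\<And>x. R \<le> norm x \<Longrightarrow> e x = 0" "\<And>x i. R \<le> norm x \<Longrightarrow> pd i e x = 0"
proof -
  obtain r where r: "tsupport e \<subseteq> ball 0 r"
    using assms unfolding Cc_inf_def by (meson bounded_subset_ballD compact_imp_bounded)
  have e0: "e x = 0" if "r \<le> norm x" for x
    using r that closure_subset[of "{x. e x \<noteq> 0}"] by (force simp: tsupport_def)
  have "pd i e x = 0" if x: "r + 1 \<le> norm x" for x i
  proof -
    have "((\<lambda>t. e (x + t *\<^sub>R axis i 1)) has_real_derivative 0) (at 0)"
    proof (rule has_field_derivative_transform_within_open[OF DERIV_const, of "ball 0 1"])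
      fix t :: real assume "t \<in> ball 0 1"
      then have "r \<le> norm (x + t *\<^sub>R axis i 1)"
        using x norm_triangle_ineq4[of "x + t *\<^sub>R axis i 1" "t *\<^sub>R axis i 1"] by simp
      then show "0 = e (x + t *\<^sub>R axis i 1)" using e0 by simp
    qed simp_all
    then show ?thesis using DERIV_unique[OF Cc_inf_DERIV_axis[OF assms]] by blast
  qed
  with e0 show ?thesis by (intro that[of "r + 1"]) auto
qed

lemma weak_grad_Cc_inf:
  assumes e: "Cc_inf \<Omega> e"
  shows "weak_grad e (\<lambda>x. \<chi> i. pd i e x)"
  unfolding weak_grad_def
proof (intro allI impI conjI)
  fix \<phi> i assume \<phi>: "Cc_inf UNIV \<phi>"
  obtain R where R: "\<And>x. R \<le> norm x \<Longrightarrow> e x = 0" "\<And>x i. R \<le> norm x \<Longrightarrow> pd i e x = 0"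
    using Cc_inf_vanishing_outside_ball[OF e] by blast
  note cont = Cc_inf_continuous[OF e] Cc_inf_continuous_pd[OF e]
    Cc_inf_continuous[OF \<phi>] Cc_inf_continuous_pd[OF \<phi>]
  show int1: "integrable lborel (\<lambda>x. e x * pd i \<phi> x)"
    using R by (intro integrable_vanishing_outside_ball[of _ R] continuous_intros cont) auto
  have int2: "integrable lborel (\<lambda>x. pd i e x * \<phi> x)"
    using R by (intro integrable_vanishing_outside_ball[of _ R] continuous_intros cont) auto
  then show "integrable lborel (\<lambda>x. (\<chi> i. pd i e x) $ i * \<phi> x)" by simp
  have "integral\<^sup>L lborel (\<lambda>x. pd i e x * \<phi> x + e x * pd i \<phi> x) = 0"
  proof (rule integral_directional_derivative_eq_0[of "\<lambda>x. e x * \<phi> x" _ R])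
    show "((\<lambda>t. e (x + t *\<^sub>R axis i 1) * \<phi> (x + t *\<^sub>R axis i 1)) has_real_derivative
        pd i e x * \<phi> x + e x * pd i \<phi> x) (at 0)" for x
      using DERIV_mult[OF Cc_inf_DERIV_axis[OF e] Cc_inf_DERIV_axis[OF \<phi>]] by (simp add: mult.commute)
  qed (intro continuous_intros cont | simp add: R)+
  with int1 int2 show "(\<integral>x. e x * pd i \<phi> x \<partial>lborel) = - (\<integral>x. (\<chi> i. pd i e x) $ i * \<phi> x \<partial>lborel)"
    by simp
qed

lemma good_grad_Cc_inf:
  assumes e: "Cc_inf \<Omega> e"
  shows "good_grad e (\<lambda>x. \<chi> i. pd i e x)"
proof -
  obtain R where R: "\<And>x i. R \<le> norm x \<Longrightarrow> pd i e x = 0"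
    using Cc_inf_vanishing_outside_ball[OF e] by metis
  have cont_grad: "continuous_on UNIV (\<lambda>x. \<chi> i. pd i e x)"
    by (intro continuous_on_vec_lambda Cc_inf_continuous_pd[OF e])
  have "integrable lborel (\<lambda>x. (norm (\<chi> i. pd i e x))\<^sup>2)"
  proof (rule integrable_vanishing_outside_ball[of _ R])
    show "continuous_on UNIV (\<lambda>x. (norm (\<chi> i. pd i e x))\<^sup>2)"
      by (intro continuous_intros cont_grad)
    show "(norm (\<chi> i. pd i e x))\<^sup>2 = 0" if "R \<le> norm x" for x
      using R[OF that] by (simp add: vec_eq_iff[of _ 0])
  qed
  then show ?thesis
    using weak_grad_Cc_inf[OF e] borel_measurable_continuous_onI[OF cont_grad]
    by (simp add: good_grad_def)
qed

lemma borel_measurable_vec_nth [measurable (raw)]: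
  fixes f :: "'a \<Rightarrow> 'b::topological_space ^ 'n"
  assumes "f \<in> borel_measurable M"
  shows "(\<lambda>x. f x $ i) \<in> borel_measurable M"
proof -
  have "(\<lambda>v::'b ^ 'n. v $ i) \<in> borel_measurable borel"
    by (intro borel_measurable_continuous_onI continuous_on_component continuous_on_id)
  with assms show ?thesis by (rule measurable_compose)
qed

lemma good_grad_measurable [measurable_dest]:
  "good_grad u g \<Longrightarrow> g \<in> borel_measurable lborel"
  by (simp add: good_grad_def)

lemma good_grad_integrable_on_cbox:
  assumes g: "good_grad u g"
  shows "integrable lborel (\<lambda>x. indicator (cbox a b) x * g x $ i)"
proof (rule Bochner_Integration.integrable_bound)
  show "integrable lborel (\<lambda>x. indicator (cbox a b) x * norm (g x))"
    using g by (intro square_integrable_imp_integrable_on_cbox) (auto simp: good_grad_def)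
  show "AE x in lborel. norm (indicator (cbox a b) x * g x $ i) \<le> norm (indicator (cbox a b) x * norm (g x))"
    by (intro AE_I2) (simp add: abs_mult component_le_norm_cart mult_left_mono)
qed (use g in measurable)

lemma good_grad_unique_AE:
  assumes g1: "good_grad u g1" and g2: "good_grad u g2"
  shows "AE x in lborel. g1 x = g2 x"
proof -
  have "AE x in lborel. g1 x $ i - g2 x $ i = 0" for i
  proof (rule AE_eq_0_if_test_integrals_eq_0)
    show "(\<lambda>x. g1 x $ i - g2 x $ i) \<in> borel_measurable lborel"
      using g1 g2 by measurable
    show "integrable lborel (\<lambda>x. indicator (cbox a b) x * (g1 x $ i - g2 x $ i))" for a b
      using good_grad_integrable_on_cbox[OF g1] good_grad_integrable_on_cbox[OF g2]
      by (simp add: right_diff_distrib)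
    fix \<phi> assume "Cc_inf UNIV \<phi>"
    then have "integrable lborel (\<lambda>x. g1 x $ i * \<phi> x)" "integrable lborel (\<lambda>x. g2 x $ i * \<phi> x)"
      and "(\<integral>x. u x * pd i \<phi> x \<partial>lborel) = - (\<integral>x. g1 x $ i * \<phi> x \<partial>lborel)"
      and "(\<integral>x. u x * pd i \<phi> x \<partial>lborel) = - (\<integral>x. g2 x $ i * \<phi> x \<partial>lborel)"
      using g1 g2 unfolding good_grad_def weak_grad_def by blast+
    then show "(\<integral>x. (g1 x $ i - g2 x $ i) * \<phi> x \<partial>lborel) = 0"
      by (simp add: left_diff_distrib)
  qed
  then have "AE x in lborel. \<forall>i. g1 x $ i - g2 x $ i = 0"
    by (simp add: AE_all_countable)
  then show ?thesis
    by eventually_elim (simp add: vec_eq_iff)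
qed

lemma gradsq_nonneg: "0 \<le> gradsq u"
  by (simp add: gradsq_def)

lemma gradsq_eq_good_grad:
  assumes g: "good_grad u g"
  shows "gradsq u = (\<integral>x. (norm (g x))\<^sup>2 \<partial>lborel)"
proof -
  have gg: "good_grad u (grad u)"
    unfolding grad_def using g by (rule someI[of "good_grad u"])
  then have [measurable]: "grad u \<in> borel_measurable borel" "g \<in> borel_measurable borel"
    using g by (simp_all add: good_grad_def)
  have "AE x in lborel. grad u x = g x"
    using gg g by (rule good_grad_unique_AE)
  then show ?thesis
    unfolding gradsq_def by (intro integral_cong_AE) (auto elim!: eventually_mono)
qed

lemma good_grad_scale:
  assumes g: "good_grad u g"
  shows "good_grad (\<lambda>x. c * u x) (\<lambda>x. c *\<^sub>R g x)"
proof -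
  have [measurable]: "g \<in> borel_measurable borel"
    using g by (simp add: good_grad_def)
  have "weak_grad (\<lambda>x. c * u x) (\<lambda>x. c *\<^sub>R g x)"
    using g unfolding good_grad_def weak_grad_def by (simp add: mult.assoc)
  moreover have "integrable lborel (\<lambda>x. (norm (c *\<^sub>R g x))\<^sup>2)"
    using g by (simp add: good_grad_def power_mult_distrib)
  moreover have "(\<lambda>x. c *\<^sub>R g x) \<in> borel_measurable borel"
    by measurable
  ultimately show ?thesis
    by (simp add: good_grad_def)
qed

lemma gradsq_scale:
  assumes "u \<in> D12"
  shows "gradsq (\<lambda>x. c * u x) = c\<^sup>2 * gradsq u"
proof -
  obtain g where g: "good_grad u g"
    using assms by (auto simp: D12_def)
  have "gradsq (\<lambda>x. c * u x) = (\<integral>x. c\<^sup>2 * (norm (g x))\<^sup>2 \<partial>lborel)"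
    using gradsq_eq_good_grad[OF good_grad_scale[OF g]] by (simp add: power_mult_distrib)
  also have "\<dots> = c\<^sup>2 * gradsq u"
    by (simp add: gradsq_eq_good_grad[OF g])
  finally show ?thesis .
qed

lemma D12_scale:
  assumes "u \<in> D12"
  shows "(\<lambda>x. c * u x) \<in> D12"
proof -
  obtain g where [measurable]: "u \<in> borel_measurable lborel"
    and int: "integrable lborel (\<lambda>x. \<bar>u x\<bar> ^ 6)" and g: "good_grad u g"
    using assms by (auto simp: D12_def)
  have "(\<lambda>x. \<bar>c * u x\<bar> ^ 6) = (\<lambda>x. \<bar>c\<bar> ^ 6 * \<bar>u x\<bar> ^ 6)"
    by (simp add: abs_mult power_mult_distrib)
  then have "integrable lborel (\<lambda>x. \<bar>c * u x\<bar> ^ 6)"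
    using int by simp
  moreover have "(\<lambda>x. c * u x) \<in> borel_measurable lborel"
    by measurable
  ultimately show ?thesis
    using good_grad_scale[OF g, of c] unfolding D12_def mem_Collect_eq by blast
qed

lemma Cc_inf_in_D12:
  assumes e: "Cc_inf \<Omega> e"
  shows "e \<in> D12"
proof -
  obtain R where R: "\<And>x. R \<le> norm x \<Longrightarrow> e x = 0"
    using Cc_inf_vanishing_outside_ball[OF e] by metis
  have cont: "continuous_on UNIV e"
    using e by (rule Cc_inf_continuous)
  then have "e \<in> borel_measurable lborel"
    by (simp add: borel_measurable_continuous_onI)
  moreover have "integrable lborel (\<lambda>x. \<bar>e x\<bar> ^ 6)"
    using R by (intro integrable_vanishing_outside_ball[of _ R] continuous_intros cont) simp
  ultimately show ?thesis
    using good_grad_Cc_inf[OF e] unfolding D12_def by blast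
qed

section \<open>The mountain pass level along a straight path\<close>

lemma Cc_inf_nonzero_imp_mem: "Cc_inf \<Omega> e \<Longrightarrow> e x \<noteq> 0 \<Longrightarrow> x \<in> \<Omega>"
  using closure_subset by (fastforce simp: Cc_inf_def tsupport_def)

lemma Cc_inf_potential_vanishes:
  assumes "Cc_inf \<Omega> e" "\<Omega> \<subseteq> V -` {0}"
  shows "(\<lambda>x. V x * (c * e x)\<^sup>2) = (\<lambda>x. 0)"
  using assms Cc_inf_nonzero_imp_mem by fastforce

lemma Cc_inf_scale_in_E_pot:
  assumes "Cc_inf \<Omega> e" "\<Omega> \<subseteq> V -` {0}"
  shows "(\<lambda>x. c * e x) \<in> E_pot V"
  using Cc_inf_potential_vanishes[OF assms] D12_scale[OF Cc_inf_in_D12[OF assms(1)]]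
  by (simp add: E_pot_def)

lemma normsq_diagonal_Cc_inf:
  assumes "Cc_inf \<Omega> e" "\<Omega> \<subseteq> V -` {0}" "\<Omega> \<subseteq> W -` {0}"
  shows "normsq lam V W (\<lambda>x. c * e x, \<lambda>x. c * e x) = 2 * c\<^sup>2 * gradsq e"
  using Cc_inf_potential_vanishes[OF assms(1,2)] Cc_inf_potential_vanishes[OF assms(1,3)]
    gradsq_scale[OF Cc_inf_in_D12[OF assms(1)]]
  by (simp add: normsq_def)

lemma diagonal_segment_in_paths:
  assumes "Cc_inf \<Omega> e" "\<Omega> \<subseteq> V -` {0}" "\<Omega> \<subseteq> W -` {0}"
  shows "(\<lambda>t. (\<lambda>x. t * e x, \<lambda>x. t * e x)) \<in> paths lam V W e"
proof -
  define K where "K = sqrt (2 * gradsq e) + 1"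
  have "K > 0"
    by (simp add: K_def gradsq_nonneg add_nonneg_pos)
  have dist: "sqrt (normsq lam V W (\<lambda>x. s * e x - t * e x, \<lambda>x. s * e x - t * e x)) \<le> \<bar>s - t\<bar> * K"
    for s t
  proof -
    have "(\<lambda>x. s * e x - t * e x) = (\<lambda>x. (s - t) * e x)"
      by (simp add: left_diff_distrib)
    then have "sqrt (normsq lam V W (\<lambda>x. s * e x - t * e x, \<lambda>x. s * e x - t * e x)) =
        \<bar>s - t\<bar> * sqrt (2 * gradsq e)"
      by (simp add: normsq_diagonal_Cc_inf[OF assms] real_sqrt_mult)
    then show ?thesis
      by (simp add: K_def distrib_left)
  qed
  have "\<exists>\<delta>>0. \<forall>s. \<bar>s - t\<bar> < \<delta> \<longrightarrow>
          sqrt (normsq lam V W (\<lambda>x. s * e x - t * e x, \<lambda>x. s * e x - t * e x)) < \<epsilon>"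
    if "\<epsilon> > 0" for t \<epsilon> :: real
  proof (intro exI[of _ "\<epsilon> / K"] conjI allI impI)
    show "\<epsilon> / K > 0" using \<open>\<epsilon> > 0\<close> \<open>K > 0\<close> by simp
    fix s assume "\<bar>s - t\<bar> < \<epsilon> / K"
    with dist[of s t] \<open>K > 0\<close> show "sqrt (normsq lam V W (\<lambda>x. s * e x - t * e x, \<lambda>x. s * e x - t * e x)) < \<epsilon>"
      by (simp add: pos_less_divide_eq)
  qed
  moreover have "(\<lambda>x. t * e x, \<lambda>x. t * e x) \<in> E_sp V W" for t
    using Cc_inf_scale_in_E_pot[OF assms(1,2)] Cc_inf_scale_in_E_pot[OF assms(1,3)]
    by (simp add: E_sp_def)
  ultimately show ?thesis
    unfolding paths_def by simp blast
qed

lemma Jfun_diagonal_segment_le: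
  assumes e: "Cc_inf \<Omega> e" "\<Omega> \<subseteq> V -` {0}" "\<Omega> \<subseteq> W -` {0}"
    and \<xi>: "\<And>y. 0 \<le> y \<Longrightarrow> 0 \<le> \<xi> y \<and> \<xi> y \<le> 1"
    and "\<alpha> + \<beta> > 0" "b1 \<ge> 0" "b2 \<ge> 0" "b1 + b2 \<le> B" and t: "t \<in> {0..1}"
  shows "Jfun \<xi> \<alpha> \<beta> b1 b2 T lam V W (\<lambda>x. t * e x, \<lambda>x. t * e x) \<le> gradsq e + B * (gradsq e)\<^sup>2 / 4"
proof -
  define G where "G = gradsq e"
  define N where "N = normsq lam V W (\<lambda>x. t * e x, \<lambda>x. t * e x)"
  define I where "I = (\<integral>x. (max (t * e x) 0) powr \<alpha> * (max (t * e x) 0) powr \<beta> \<partial>lborel)"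
  have "0 \<le> G" "t\<^sup>2 \<le> 1"
    using t by (auto simp: G_def gradsq_nonneg power_le_one)
  then have tG: "0 \<le> t\<^sup>2 * G" "t\<^sup>2 * G \<le> G"
    by (auto simp: mult_left_le_one_le)
  have N: "N = 2 * (t\<^sup>2 * G)"
    unfolding N_def G_def by (simp add: normsq_diagonal_Cc_inf[OF e])
  have g: "gradsq (\<lambda>x. t * e x) = t\<^sup>2 * G"
    unfolding G_def by (rule gradsq_scale[OF Cc_inf_in_D12[OF e(1)]])
  have "0 \<le> \<xi> (N / T\<^sup>2)" "\<xi> (N / T\<^sup>2) \<le> 1"
    using \<xi>[of "N / T\<^sup>2"] N tG by auto
  moreover have "0 \<le> (b1 + b2) * (t\<^sup>2 * G)\<^sup>2" "(b1 + b2) * (t\<^sup>2 * G)\<^sup>2 \<le> B * G\<^sup>2"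
    using assms(6-8) tG by (auto intro!: mult_mono power_mono)
  ultimately have "\<xi> (N / T\<^sup>2) * ((b1 + b2) * (t\<^sup>2 * G)\<^sup>2) \<le> B * G\<^sup>2"
    by (meson mult_left_le_one_le order_trans)
  moreover have "0 \<le> I / (\<alpha> + \<beta>)"
    unfolding I_def using assms(5) by (simp add: integral_nonneg_AE)
  moreover have "Jfun \<xi> \<alpha> \<beta> b1 b2 T lam V W (\<lambda>x. t * e x, \<lambda>x. t * e x) =
      N / 2 + \<xi> (N / T\<^sup>2) * ((b1 + b2) * (t\<^sup>2 * G)\<^sup>2) / 4 - I / (\<alpha> + \<beta>)"
    by (simp add: Jfun_def g distrib_right flip: N_def I_def)
  ultimately show ?thesis
    using N tG unfolding G_def by linarith
qed

lemma mp_level_le_path_bound: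
  assumes "\<gamma> \<in> paths lam V W e0"
    and "\<And>t. t \<in> {0..1} \<Longrightarrow> Jfun \<xi> \<alpha> \<beta> b1 b2 T lam V W (\<gamma> t) \<le> D"
  shows "mp_level \<xi> \<alpha> \<beta> b1 b2 T lam V W e0 \<le> ereal D"
proof -
  have "mp_level \<xi> \<alpha> \<beta> b1 b2 T lam V W e0 \<le> (SUP t\<in>{0..1}. ereal (Jfun \<xi> \<alpha> \<beta> b1 b2 T lam V W (\<gamma> t)))"
    unfolding mp_level_def using assms(1) by (rule INF_lower)
  also have "\<dots> \<le> ereal D"
    using assms(2) by (intro SUP_least) simp
  finally show ?thesis .
qed

theorem lemma2p5:
  fixes \<alpha> \<beta> bstar :: real and V W e0 :: fn3 and \<xi> :: "real \<Rightarrow> real"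
  assumes "\<alpha> > 1" "\<beta> > 1" "\<alpha> + \<beta> \<le> 4"
    and "H1 V W" "H2 V W"
    and "cutoff \<xi>"
    and "Cc_inf (interior (V -` {0}) \<inter> interior (W -` {0})) e0"
    and "\<exists>x. e0 x > 0"
    and "bstar > 0"
    and "\<forall>T>0. \<forall>lam>0. \<forall>b1>0. \<forall>b2>0. b1 + b2 < bstar \<longrightarrow>
           Jfun \<xi> \<alpha> \<beta> b1 b2 T lam V W (e0, e0) < 0"
  shows "\<exists>D>0. \<forall>lam\<ge>1. \<forall>T>0. \<forall>b1>0. \<forall>b2>0. b1 + b2 < bstar \<longrightarrow>
           mp_level \<xi> \<alpha> \<beta> b1 b2 T lam V W e0 \<le> ereal D"
proof -
  note e0 = assms(7)
  have sub: "interior (V -` {0}) \<inter> interior (W -` {0}) \<subseteq> V -` {0}"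
            "interior (V -` {0}) \<inter> interior (W -` {0}) \<subseteq> W -` {0}"
    using interior_subset by blast+
  have \<xi>: "0 \<le> \<xi> y \<and> \<xi> y \<le> 1" if "0 \<le> y" for y
    using assms(6) that by (simp add: cutoff_def)
  define D where "D = gradsq e0 + bstar * (gradsq e0)\<^sup>2 / 4 + 1"
  have "D > 0"
    using gradsq_nonneg[of e0] \<open>bstar > 0\<close> by (simp add: D_def add_nonneg_pos)
  moreover have "mp_level \<xi> \<alpha> \<beta> b1 b2 T lam V W e0 \<le> ereal D"
    if "0 < b1" "0 < b2" "b1 + b2 < bstar" for lam T b1 b2
  proof (rule mp_level_le_path_bound[OF diagonal_segment_in_paths[OF e0 sub]])
    fix t :: real assume "t \<in> {0..1}"
    with that assms(1,2) have "Jfun \<xi> \<alpha> \<beta> b1 b2 T lam V W (\<lambda>x. t * e0 x, \<lambda>x. t * e0 x)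
        \<le> gradsq e0 + bstar * (gradsq e0)\<^sup>2 / 4"
      by (intro Jfun_diagonal_segment_le[OF e0 sub \<xi>]) auto
    then show "Jfun \<xi> \<alpha> \<beta> b1 b2 T lam V W (\<lambda>x. t * e0 x, \<lambda>x. t * e0 x) \<le> D"
      by (simp add: D_def)
  qed
  ultimately show ?thesis
    by blast
qed

end
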